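(* Let $n\ge r\ge1$, let $B\in\mathbb{R}^{r\times r}$ have nonnegative entries with no zero row and no zero column, let $\Theta\in\mathbb{R}^{n\times r}$ be a normalized membership matrix, and let $D_1,D_2$ be $n\times n$ diagonal matrices with positive diagonal entries such that $A=D_1\Theta B\Theta^TD_2$ has entries in $[0,1]$. Let $P$ and $Q$ be the matrices obtained by scaling the rows of $A$ and of $A^T$, respectively, so that they are row stochastic, and let $M=\Theta^TP\Theta$, $N=\Theta^TQ\Theta$. If $\beta^2<1$, then the matrix equation $$X-\frac{\beta^2}{2}\big(MXM^T+NXN^T\big)=\Theta^T(PP^T+QQ^T)\Theta$$ has a unique solution $X\in\mathbb{R}^{r\times r}$, which is symmetric positive semidefinite. Furthermore, if $B$ is invertible then $X$ is positive definite.
   Context: The nodes $\{1,\ldots,n\}$ are partitioned into $r$ nonempty blocks; $\chi^{(i)}\in\{0,1\}^n$ is the indicator vector of the $i$-th block and $n_i$ its size. The normalized membership matrix $\Theta$ has $i$-th column $\Theta e_i=\chi^{(i)}/\sqrt{n_i}$, $i=1,\ldots,r$ (so its columns are orthonormal). Thus $P=\mathrm{Diag}(A\mathbf 1)^{-1}A$ and $Q=\mathrm{Diag}(A^T\mathbf 1)^{-1}A^T$ with $\mathbf 1$ the all-ones vector. *)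

theory Defs
  imports "HOL-Analysis.Analysis"
begin

definition membership_matrix :: "('n::finite \<Rightarrow> 'r::finite) \<Rightarrow> real^'r^'n" where
  "membership_matrix c = (\<chi> i k. if c i = k then 1 / sqrt (real (card {j. c j = k})) else 0)"

definition row_normalize :: "real^'m::finite^'k::finite \<Rightarrow> real^'m^'k" where
  "row_normalize A = (\<chi> i j. A $ i $ j / (\<Sum>l\<in>UNIV. A $ i $ l))"

definition is_diagonal :: "real^'n::finite^'n \<Rightarrow> bool" where
  "is_diagonal D \<longleftrightarrow> (\<forall>i j. i \<noteq> j \<longrightarrow> D $ i $ j = 0)"

definition psd :: "real^'n::finite^'n \<Rightarrow> bool" where
  "psd X \<longleftrightarrow> transpose X = X \<and> (\<forall>v. 0 \<le> v \<bullet> (X *v v))"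

definition pos_def :: "real^'n::finite^'n \<Rightarrow> bool" where
  "pos_def X \<longleftrightarrow> transpose X = X \<and> (\<forall>v. v \<noteq> 0 \<longrightarrow> 0 < v \<bullet> (X *v v))"

end

theory Submission
  imports Defs
begin

(* Write L X = (beta^2/2) (M X M^T + N X N^T). The compressed matrices M and N are nonnegative and
   fix the positive vector s of square roots of the block sizes (since P 1 = 1, Theta s = 1 and
   Theta^T 1 = s), so L contracts the weighted norm max |Z_ab| / (s_a s_b) by the factor beta^2 < 1.
   Hence X |-> X - L X is injective, so bijective, and since L commutes with transposition the
   solution is symmetric. As L preserves semidefiniteness, X - L^k X = C + L C + ... + L^(k-1) C is
   semidefinite, while L^k X tends to 0; so X is semidefinite and X = C + L X dominates C.
   Finally v^T C v >= |P^T Theta v|^2, and P^T Theta = D2 Theta B^T Theta^T G with G a positive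
   diagonal matrix, which is injective when B is invertible. *)

definition nonneg_mat :: "real^'m::finite^'k::finite \<Rightarrow> bool" where
  "nonneg_mat X \<longleftrightarrow> (\<forall>i j. 0 \<le> X $ i $ j)"

lemma nonneg_mat_mult: "nonneg_mat X \<Longrightarrow> nonneg_mat Y \<Longrightarrow> nonneg_mat (X ** Y)"
  by (simp add: nonneg_mat_def matrix_matrix_mult_def sum_nonneg)

lemma nonneg_mat_transpose: "nonneg_mat X \<Longrightarrow> nonneg_mat (transpose X)"
  by (simp add: nonneg_mat_def transpose_def)

lemma transpose_add: "transpose (X + Y) = transpose X + transpose (Y :: 'a::semiring_1^'n^'m)"
  by (simp add: vec_eq_iff transpose_def)

lemma transpose_diff: "transpose (X - Y) = transpose X - transpose (Y :: 'a::ring_1^'n^'m)"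
  by (simp add: vec_eq_iff transpose_def)

lemma matrix_add_rdistrib: "(A + B) ** C = A ** C + B ** (C :: 'a::semiring_1^'n^'m)"
  by (simp add: vec_eq_iff matrix_matrix_mult_def sum.distrib distrib_right)

lemma inner_transpose_mult:
  fixes T :: "real^'n::finite^'m::finite"
  shows "v \<bullet> (transpose T *v w) = (T *v v) \<bullet> w"
  by (simp add: dot_lmul_matrix[symmetric] inner_commute)

lemma quadratic_form_congruence:
  fixes T :: "real^'n::finite^'m::finite"
  shows "v \<bullet> ((transpose T ** Y ** T) *v v) = (T *v v) \<bullet> (Y *v (T *v v))"
  unfolding matrix_vector_mul_assoc[symmetric] by (rule inner_transpose_mult)

lemma quadratic_form_gram:
  fixes P :: "real^'n::finite^'m::finite"
  shows "w \<bullet> ((P ** transpose P) *v w) = (transpose P *v w) \<bullet> (transpose P *v w)"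
  unfolding matrix_vector_mul_assoc[symmetric] by (metis inner_transpose_mult transpose_transpose)

lemma psd_zero: "psd 0"
  by (simp add: psd_def vec_eq_iff transpose_def)

lemma psd_add: "psd X \<Longrightarrow> psd Y \<Longrightarrow> psd (X + Y)"
  by (simp add: psd_def transpose_add matrix_vector_mult_add_rdistrib inner_add_right)

lemma psd_scaleR: "0 \<le> r \<Longrightarrow> psd X \<Longrightarrow> psd (r *\<^sub>R X)"
  by (simp add: psd_def transpose_scalar scaleR_matrix_vector_assoc[symmetric])

lemma psd_congruence:
  fixes T :: "real^'n::finite^'m::finite"
  assumes "psd Y"
  shows "psd (transpose T ** Y ** T)"
  using assms
  by (simp add: psd_def quadratic_form_congruence matrix_transpose_mul matrix_mul_assoc)

lemma psd_gram:
  fixes P :: "real^'n::finite^'m::finite"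
  shows "psd (P ** transpose P)"
  by (simp add: psd_def quadratic_form_gram matrix_transpose_mul del: transpose_matrix_vector)

lemma psd_if_pos_def: "pos_def X \<Longrightarrow> psd X"
  unfolding psd_def pos_def_def by (metis inner_zero_left order.refl less_imp_le)

lemma pos_def_add_psd: "pos_def X \<Longrightarrow> psd Y \<Longrightarrow> pos_def (X + Y)"
  by (simp add: psd_def pos_def_def transpose_add matrix_vector_mult_add_rdistrib
      inner_add_right add_pos_nonneg)

lemma pos_def_congruence_gram:
  fixes T :: "real^'r::finite^'n::finite" and P :: "real^'k::finite^'n"
  assumes "psd Y" and "\<And>v. v \<noteq> 0 \<Longrightarrow> transpose P *v (T *v v) \<noteq> 0"
  shows "pos_def (transpose T ** (P ** transpose P + Y) ** T)"
  unfolding pos_def_def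
proof (intro conjI allI impI)
  show "transpose (transpose T ** (P ** transpose P + Y) ** T) = transpose T ** (P ** transpose P + Y) ** T"
    using psd_congruence[OF psd_add[OF psd_gram[of P] assms(1)], of T] by (simp add: psd_def)
next
  fix v :: "real^'r" assume "v \<noteq> 0"
  then have "0 < (transpose P *v (T *v v)) \<bullet> (transpose P *v (T *v v))"
    using assms(2) by simp
  moreover have "0 \<le> (T *v v) \<bullet> (Y *v (T *v v))"
    using assms(1) by (simp add: psd_def)
  moreover have "v \<bullet> ((transpose T ** (P ** transpose P + Y) ** T) *v v)
      = (transpose P *v (T *v v)) \<bullet> (transpose P *v (T *v v)) + (T *v v) \<bullet> (Y *v (T *v v))"
    by (simp add: quadratic_form_congruence quadratic_form_gram matrix_vector_mult_add_rdistrib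
        inner_add_right del: transpose_matrix_vector)
  ultimately show "0 < v \<bullet> ((transpose T ** (P ** transpose P + Y) ** T) *v v)"
    by linarith
qed

definition weighted_bound :: "real^'r::finite^'r \<Rightarrow> real^'r \<Rightarrow> real \<Rightarrow> bool" where
  "weighted_bound Z s t \<longleftrightarrow> (\<forall>a b. \<bar>Z $ a $ b\<bar> \<le> t * s $ a * s $ b)"

lemma weighted_bound_exists:
  assumes "\<forall>a. 0 < s $ a"
  shows "\<exists>t. weighted_bound Z s t"
proof -
  define t where "t = (\<Sum>a\<in>UNIV. \<Sum>b\<in>UNIV. \<bar>Z $ a $ b\<bar> / (s $ a * s $ b))"
  have "\<bar>Z $ a $ b\<bar> \<le> t * s $ a * s $ b" for a b
  proof -
    have pos: "0 < s $ a * s $ b" for a b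
      using assms by simp
    have "\<bar>Z $ a $ b\<bar> / (s $ a * s $ b) \<le> (\<Sum>b\<in>UNIV. \<bar>Z $ a $ b\<bar> / (s $ a * s $ b))"
      by (rule member_le_sum) (auto intro: divide_nonneg_pos pos)
    also have "\<dots> \<le> t"
      unfolding t_def
      by (rule member_le_sum[where f = "\<lambda>a. \<Sum>b\<in>UNIV. \<bar>Z $ a $ b\<bar> / (s $ a * s $ b)"])
        (auto intro!: sum_nonneg divide_nonneg_pos pos)
    finally show ?thesis
      using pos by (simp add: divide_le_eq mult.assoc)
  qed
  then show ?thesis
    unfolding weighted_bound_def by blast
qed

lemma weighted_bound_bilinear:
  assumes "weighted_bound Z s t"
  shows "\<bar>x \<bullet> (Z *v y)\<bar> \<le> t * (\<Sum>a\<in>UNIV. \<bar>x $ a\<bar> * s $ a) * (\<Sum>b\<in>UNIV. \<bar>y $ b\<bar> * s $ b)"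
proof -
  have "\<bar>x \<bullet> (Z *v y)\<bar> = \<bar>\<Sum>a\<in>UNIV. \<Sum>b\<in>UNIV. x $ a * Z $ a $ b * y $ b\<bar>"
    by (simp add: inner_vec_def matrix_vector_mult_def sum_distrib_left mult.assoc)
  also have "\<dots> \<le> (\<Sum>a\<in>UNIV. \<Sum>b\<in>UNIV. \<bar>x $ a\<bar> * \<bar>Z $ a $ b\<bar> * \<bar>y $ b\<bar>)"
    by (rule order_trans[OF sum_abs sum_mono], rule order_trans[OF sum_abs sum_mono]) (simp add: abs_mult)
  also have "\<dots> \<le> (\<Sum>a\<in>UNIV. \<Sum>b\<in>UNIV. t * (\<bar>x $ a\<bar> * s $ a) * (\<bar>y $ b\<bar> * s $ b))"
  proof (intro sum_mono)
    fix a b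
    have "\<bar>x $ a\<bar> * \<bar>Z $ a $ b\<bar> * \<bar>y $ b\<bar> \<le> \<bar>x $ a\<bar> * (t * s $ a * s $ b) * \<bar>y $ b\<bar>"
      using assms unfolding weighted_bound_def by (intro mult_right_mono mult_left_mono) auto
    then show "\<bar>x $ a\<bar> * \<bar>Z $ a $ b\<bar> * \<bar>y $ b\<bar> \<le> t * (\<bar>x $ a\<bar> * s $ a) * (\<bar>y $ b\<bar> * s $ b)"
      by (simp add: mult_ac)
  qed
  also have "\<dots> = t * ((\<Sum>a\<in>UNIV. \<bar>x $ a\<bar> * s $ a) * (\<Sum>b\<in>UNIV. \<bar>y $ b\<bar> * s $ b))"
    unfolding sum_product by (simp add: sum_distrib_left mult.assoc)
  finally show ?thesis
    by (simp add: mult.assoc)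
qed

lemma matrix_congruence_entry:
  fixes M :: "real^'m::finite^'k::finite"
  shows "(M ** Z ** transpose M) $ a $ b = M $ a \<bullet> (Z *v M $ b)"
proof -
  have "(M ** Z ** transpose M) $ a $ b = ((M ** Z) *v M $ b) $ a"
    by (simp add: matrix_matrix_mult_def matrix_vector_mult_def transpose_def)
  then show ?thesis
    by (simp add: matrix_vector_mul_assoc[symmetric] matrix_vector_mul_component)
qed

lemma weighted_bound_congruence:
  assumes "nonneg_mat M" and "M *v s = s" and "weighted_bound Z s t"
  shows "weighted_bound (M ** Z ** transpose M) s t"
  unfolding weighted_bound_def
proof (intro allI)
  fix a b
  have row_sum: "(\<Sum>c\<in>UNIV. \<bar>M $ a $ c\<bar> * s $ c) = s $ a" for a
    using assms(1) arg_cong[OF assms(2), of "\<lambda>v. v $ a"]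
    by (simp add: nonneg_mat_def matrix_vector_mult_def)
  show "\<bar>(M ** Z ** transpose M) $ a $ b\<bar> \<le> t * s $ a * s $ b"
    using weighted_bound_bilinear[OF assms(3), of "M $ a" "M $ b"]
    by (simp add: matrix_congruence_entry row_sum)
qed

lemma nonpos_if_le_geometric:
  fixes q K x :: real
  assumes "0 \<le> q" and "q < 1" and "\<And>k. x \<le> q ^ k * K"
  shows "x \<le> 0"
proof -
  have "(\<lambda>k. q ^ k * K) \<longlonglongrightarrow> 0 * K"
    using assms(1,2) by (intro tendsto_intros) simp
  then show ?thesis
    using LIMSEQ_le_const[of _ 0 x] assms(3) by auto
qed

definition stein_op :: "real \<Rightarrow> real^'r::finite^'r \<Rightarrow> real^'r^'r \<Rightarrow> real^'r^'r \<Rightarrow> real^'r^'r" where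
  "stein_op \<beta> M N X = (\<beta>\<^sup>2 / 2) *\<^sub>R (M ** X ** transpose M + N ** X ** transpose N)"

lemma linear_stein_op: "linear (stein_op \<beta> M N)"
  by (rule linearI)
    (simp_all add: stein_op_def matrix_add_ldistrib matrix_add_rdistrib matrix_scalar_ac
      scalar_matrix_assoc[symmetric] algebra_simps)

lemma transpose_stein_op: "transpose (stein_op \<beta> M N X) = stein_op \<beta> M N (transpose X)"
  by (simp add: stein_op_def transpose_scalar transpose_add matrix_transpose_mul matrix_mul_assoc)

lemma psd_stein_op: "psd X \<Longrightarrow> psd (stein_op \<beta> M N X)"
  using psd_congruence[of X "transpose M"] psd_congruence[of X "transpose N"]
  by (simp add: stein_op_def psd_scaleR psd_add)

locale stein_contraction =
  fixes \<beta> :: real and M N :: "real^'r::finite^'r" and s :: "real^'r"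
  assumes nonneg_M: "nonneg_mat M" and nonneg_N: "nonneg_mat N"
    and M_fixes_s: "M *v s = s" and N_fixes_s: "N *v s = s"
    and s_pos: "\<forall>a. 0 < s $ a"
    and \<beta>_sq_less_1: "\<beta>\<^sup>2 < 1"
begin

lemma weighted_bound_stein_op:
  assumes "weighted_bound Z s t"
  shows "weighted_bound (stein_op \<beta> M N Z) s (\<beta>\<^sup>2 * t)"
  unfolding weighted_bound_def
proof (intro allI)
  fix a b
  have "\<bar>(M ** Z ** transpose M) $ a $ b\<bar> \<le> t * s $ a * s $ b"
    and "\<bar>(N ** Z ** transpose N) $ a $ b\<bar> \<le> t * s $ a * s $ b"
    using weighted_bound_congruence[OF nonneg_M M_fixes_s assms]
      weighted_bound_congruence[OF nonneg_N N_fixes_s assms]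
    unfolding weighted_bound_def by blast+
  then have "\<beta>\<^sup>2 / 2 * \<bar>(M ** Z ** transpose M) $ a $ b + (N ** Z ** transpose N) $ a $ b\<bar>
      \<le> \<beta>\<^sup>2 / 2 * (2 * (t * s $ a * s $ b))"
    by (intro mult_left_mono) auto
  then show "\<bar>stein_op \<beta> M N Z $ a $ b\<bar> \<le> \<beta>\<^sup>2 * t * s $ a * s $ b"
    by (simp add: stein_op_def abs_mult)
qed

lemma weighted_bound_stein_op_power:
  assumes "weighted_bound Z s t"
  shows "weighted_bound ((stein_op \<beta> M N ^^ k) Z) s ((\<beta>\<^sup>2) ^ k * t)"
proof (induction k)
  case 0
  then show ?case using assms by simp
next
  case (Suc k)
  then show ?case using weighted_bound_stein_op by (simp add: mult.assoc)
qed

lemma stein_op_fixpoint_eq_0: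
  assumes "stein_op \<beta> M N Z = Z"
  shows "Z = 0"
proof -
  obtain t where t: "weighted_bound Z s t"
    using weighted_bound_exists s_pos by blast
  have "(stein_op \<beta> M N ^^ k) Z = Z" for k
    by (induction k) (simp_all add: assms)
  then have "\<bar>Z $ a $ b\<bar> \<le> (\<beta>\<^sup>2) ^ k * (t * s $ a * s $ b)" for a b k
    using weighted_bound_stein_op_power[OF t, of k] by (simp add: weighted_bound_def mult.assoc)
  then have "\<bar>Z $ a $ b\<bar> \<le> 0" for a b
    by (rule nonpos_if_le_geometric[OF zero_le_power2 \<beta>_sq_less_1])
  then show ?thesis
    by (simp add: vec_eq_iff)
qed

lemma inj_stein_equation: "inj (\<lambda>X. X - stein_op \<beta> M N X)"
proof (rule injI)
  fix X Y
  assume "X - stein_op \<beta> M N X = Y - stein_op \<beta> M N Y"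
  then have "stein_op \<beta> M N (X - Y) = X - Y"
    by (simp add: linear_diff[OF linear_stein_op] algebra_simps)
  then show "X = Y"
    using stein_op_fixpoint_eq_0 by fastforce
qed

lemma stein_equation_unique_solution: "\<exists>!X. X - stein_op \<beta> M N X = C"
proof -
  have "linear (\<lambda>X. X - stein_op \<beta> M N X)"
    by (intro linear_compose_sub linear_ident linear_stein_op)
  then have "surj (\<lambda>X. X - stein_op \<beta> M N X)"
    using inj_stein_equation by (rule linear_inj_imp_surj)
  then obtain X where X: "X - stein_op \<beta> M N X = C"
    by (metis surjD)
  show ?thesis
  proof (rule ex1I)
    show "X - stein_op \<beta> M N X = C"
      by (fact X)
  next
    fix Y
    assume "Y - stein_op \<beta> M N Y = C"
    with X show "Y = X"
      using injD[OF inj_stein_equation, of Y X] by simp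
  qed
qed

lemma stein_solution_symmetric:
  assumes "transpose C = C" and "X - stein_op \<beta> M N X = C"
  shows "transpose X = X"
proof -
  have "transpose X - stein_op \<beta> M N (transpose X) = transpose (X - stein_op \<beta> M N X)"
    by (simp add: transpose_diff transpose_stein_op)
  also have "\<dots> = X - stein_op \<beta> M N X"
    using assms by simp
  finally show ?thesis
    by (rule injD[OF inj_stein_equation, of "transpose X" X])
qed

lemma stein_solution_psd:
  assumes "psd C" and "X - stein_op \<beta> M N X = C"
  shows "psd X"
proof -
  let ?L = "stein_op \<beta> M N"
  have partial_sums_psd: "psd (X - (?L ^^ k) X)" for k
  proof (induction k)
    case 0
    then show ?case by (simp add: psd_zero)
  next
    case (Suc k)
    have "X - (?L ^^ Suc k) X = C + ?L (X - (?L ^^ k) X)"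
      unfolding assms(2)[symmetric] by (simp add: linear_diff[OF linear_stein_op])
    then show ?case
      using Suc assms(1) by (simp add: psd_add psd_stein_op)
  qed
  obtain t where t: "weighted_bound X s t"
    using weighted_bound_exists s_pos by blast
  have "0 \<le> v \<bullet> (X *v v)" for v
  proof -
    define K where "K = t * (\<Sum>a\<in>UNIV. \<bar>v $ a\<bar> * s $ a) * (\<Sum>a\<in>UNIV. \<bar>v $ a\<bar> * s $ a)"
    have "- (v \<bullet> (X *v v)) \<le> (\<beta>\<^sup>2) ^ k * K" for k
    proof -
      have "\<bar>v \<bullet> ((?L ^^ k) X *v v)\<bar> \<le> (\<beta>\<^sup>2) ^ k * K"
        using weighted_bound_bilinear[OF weighted_bound_stein_op_power[OF t]]
        by (simp add: K_def mult.assoc)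
      moreover have "0 \<le> v \<bullet> ((X - (?L ^^ k) X) *v v)"
        using partial_sums_psd by (simp add: psd_def)
      ultimately show ?thesis
        by (simp add: matrix_vector_mult_diff_rdistrib inner_diff_right)
    qed
    then have "- (v \<bullet> (X *v v)) \<le> 0"
      by (rule nonpos_if_le_geometric[OF zero_le_power2 \<beta>_sq_less_1])
    then show ?thesis
      by simp
  qed
  moreover have "transpose X = X"
    using stein_solution_symmetric assms psd_def by blast
  ultimately show ?thesis
    by (simp add: psd_def)
qed

lemma stein_solution_pos_def:
  assumes "pos_def C" and "X - stein_op \<beta> M N X = C"
  shows "pos_def X"
proof -
  have "psd X"
    using stein_solution_psd psd_if_pos_def assms by blast
  then have "pos_def (C + stein_op \<beta> M N X)"
    using pos_def_add_psd psd_stein_op assms(1) by blast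
  moreover have "C + stein_op \<beta> M N X = X"
    using assms(2) by auto
  ultimately show ?thesis
    by simp
qed

end

definition diag_matrix :: "real^'n::finite \<Rightarrow> real^'n^'n" where
  "diag_matrix d = (\<chi> i j. if i = j then d $ i else 0)"

lemma is_diagonal_diag_matrix: "is_diagonal (diag_matrix d)"
  by (simp add: is_diagonal_def diag_matrix_def)

lemma diag_matrix_diag: "diag_matrix d $ i $ i = d $ i"
  by (simp add: diag_matrix_def)

lemma is_diagonal_mult_left:
  assumes "is_diagonal D"
  shows "(D ** X) $ i $ j = D $ i $ i * X $ i $ j"
proof -
  have "(\<Sum>k\<in>UNIV. D $ i $ k * X $ k $ j) = (\<Sum>k\<in>UNIV. if k = i then D $ i $ i * X $ i $ j else 0)"
    using assms by (intro sum.cong) (auto simp: is_diagonal_def)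
  then show ?thesis
    by (simp add: matrix_matrix_mult_def)
qed

lemma is_diagonal_mult_right:
  assumes "is_diagonal D"
  shows "(X ** D) $ i $ j = X $ i $ j * D $ j $ j"
proof -
  have "(\<Sum>k\<in>UNIV. X $ i $ k * D $ k $ j) = (\<Sum>k\<in>UNIV. if k = j then X $ i $ j * D $ j $ j else 0)"
    using assms by (intro sum.cong) (auto simp: is_diagonal_def)
  then show ?thesis
    by (simp add: matrix_matrix_mult_def)
qed

lemma is_diagonal_mult: "is_diagonal D \<Longrightarrow> is_diagonal E \<Longrightarrow> is_diagonal (D ** E)"
  by (simp add: is_diagonal_def is_diagonal_mult_left)

lemma transpose_is_diagonal: "is_diagonal D \<Longrightarrow> transpose D = D"
  unfolding is_diagonal_def by (simp add: transpose_def vec_eq_iff) metis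

lemma is_diagonal_mult_vector:
  assumes "is_diagonal D"
  shows "D *v x = (\<chi> i. D $ i $ i * x $ i)"
proof -
  have "(\<Sum>k\<in>UNIV. D $ i $ k * x $ k) = (\<Sum>k\<in>UNIV. if k = i then D $ i $ i * x $ i else 0)" for i
    using assms by (intro sum.cong) (auto simp: is_diagonal_def)
  then show ?thesis
    by (simp add: vec_eq_iff matrix_vector_mult_def)
qed

lemma quadratic_form_pos_diagonal:
  assumes "is_diagonal D" and "\<forall>i. 0 < D $ i $ i" and "x \<noteq> 0"
  shows "0 < x \<bullet> (D *v x)"
proof -
  obtain i where "x $ i \<noteq> 0"
    using assms(3) by (auto simp: vec_eq_iff)
  moreover have "0 \<le> D $ j $ j * (x $ j)\<^sup>2" for j
    using assms(2) by (simp add: less_imp_le)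
  ultimately have "0 < (\<Sum>i\<in>UNIV. D $ i $ i * (x $ i)\<^sup>2)"
    using assms(2) by (intro sum_pos2[where i = i]) auto
  then show ?thesis
    by (simp add: is_diagonal_mult_vector[OF assms(1)] inner_vec_def power2_eq_square mult_ac)
qed

lemma pos_diagonal_mult_eq_0:
  assumes "is_diagonal D" and "\<forall>i. 0 < D $ i $ i" and "D *v x = 0"
  shows "x = 0"
  using quadratic_form_pos_diagonal[OF assms(1,2)] assms(3) by fastforce

definition sqrt_block_sizes :: "('n::finite \<Rightarrow> 'r::finite) \<Rightarrow> real^'r" where
  "sqrt_block_sizes c = (\<chi> k. sqrt (real (card {j. c j = k})))"

lemma card_block_pos:
  fixes c :: "'n::finite \<Rightarrow> 'r"
  shows "surj c \<Longrightarrow> 0 < card {j. c j = k}"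
  by (auto simp: card_gt_0_iff dest: surjD[of c k])

lemma sqrt_block_sizes_pos: "surj c \<Longrightarrow> 0 < sqrt_block_sizes c $ k"
  by (simp add: sqrt_block_sizes_def card_block_pos)

lemma membership_matrix_entry:
  "membership_matrix c $ i $ k = (if c i = k then 1 / sqrt (real (card {j. c j = k})) else 0)"
  by (simp add: membership_matrix_def)

lemma nonneg_membership_matrix: "nonneg_mat (membership_matrix c)"
  by (simp add: nonneg_mat_def membership_matrix_def)

lemma membership_matrix_mult_sqrt_block_sizes:
  assumes "surj c"
  shows "membership_matrix c *v sqrt_block_sizes c = 1"
proof -
  have "(if c i = k then 1 / sqrt (real (card {j. c j = k})) else 0) * sqrt (real (card {j. c j = k}))
      = (if k = c i then 1 else 0)" for i k
    using card_block_pos[OF assms, of k] by auto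
  then show ?thesis
    by (simp add: vec_eq_iff matrix_vector_mult_def membership_matrix_def sqrt_block_sizes_def)
qed

lemma transpose_membership_matrix_mult_1: "transpose (membership_matrix c) *v 1 = sqrt_block_sizes c"
proof -
  have "(\<Sum>i\<in>UNIV. if c i = k then 1 / sqrt (real (card {j. c j = k})) else 0)
      = sqrt (real (card {j. c j = k}))" for k
  proof -
    have "(\<Sum>i\<in>UNIV. if c i = k then 1 / sqrt (real (card {j. c j = k})) else 0)
        = real (card {j. c j = k}) / sqrt (real (card {j. c j = k}))"
      by (simp add: sum.If_cases)
    also have "\<dots> = sqrt (real (card {j. c j = k}))"
      by (rule real_div_sqrt) simp
    finally show ?thesis .
  qed
  then show ?thesis
    by (simp add: vec_eq_iff matrix_vector_mult_def membership_matrix_def sqrt_block_sizes_def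
        transpose_def del: transpose_matrix_vector)
qed

lemma transpose_membership_matrix_mult_self:
  assumes "surj c"
  shows "transpose (membership_matrix c) ** membership_matrix c = mat 1"
proof -
  have diag: "(\<Sum>i\<in>UNIV. (if c i = k then 1 / sqrt (real (card {j. c j = k})) else 0)
      * (if c i = k then 1 / sqrt (real (card {j. c j = k})) else 0)) = 1" for k
  proof -
    have "(\<Sum>i\<in>UNIV. (if c i = k then 1 / sqrt (real (card {j. c j = k})) else 0)
        * (if c i = k then 1 / sqrt (real (card {j. c j = k})) else 0))
        = (\<Sum>i\<in>UNIV. if c i = k then 1 / real (card {j. c j = k}) else 0)"
      by (intro sum.cong) auto
    also have "\<dots> = 1"
      using card_block_pos[OF assms, of k] by (simp add: sum.If_cases) (metis assms surjD)
    finally show ?thesis .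
  qed
  have "(\<Sum>i\<in>UNIV. (if c i = k then 1 / sqrt (real (card {j. c j = k})) else 0)
      * (if c i = l then 1 / sqrt (real (card {j. c j = l})) else 0)) = (if k = l then 1 else 0)" for k l
    using diag by (cases "k = l") (auto intro!: sum.neutral cong: if_cong)
  then show ?thesis
    by (simp add: vec_eq_iff matrix_matrix_mult_def transpose_def membership_matrix_def mat_def)
qed

lemma membership_compress_fixes_sqrt_block_sizes:
  assumes "surj c" and "P *v 1 = 1"
  shows "(transpose (membership_matrix c) ** P ** membership_matrix c) *v sqrt_block_sizes c
    = sqrt_block_sizes c"
  using assms
  by (simp add: matrix_vector_mul_assoc[symmetric] membership_matrix_mult_sqrt_block_sizes
      transpose_membership_matrix_mult_1 del: transpose_matrix_vector)

lemma membership_matrix_mult_entry: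
  fixes B :: "real^'m::finite^'r::finite" and c :: "'n::finite \<Rightarrow> 'r"
  shows "(membership_matrix c ** B) $ i $ j = B $ c i $ j / sqrt (real (card {l. c l = c i}))"
  by (simp add: matrix_matrix_mult_def membership_matrix_entry if_distrib if_distribR cong: if_cong)

lemma membership_congruence_entry:
  fixes B :: "real^'r::finite^'r" and c :: "'n::finite \<Rightarrow> 'r"
  shows "(membership_matrix c ** B ** transpose (membership_matrix c)) $ i $ j
    = B $ c i $ c j / (sqrt (real (card {l. c l = c i})) * sqrt (real (card {l. c l = c j})))"
  by (simp add: matrix_matrix_mult_def[of "membership_matrix c ** B"] membership_matrix_mult_entry
      transpose_def membership_matrix_entry if_distrib if_distribR cong: if_cong)

lemma block_model_entry:
  assumes "is_diagonal D1" and "is_diagonal D2"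
  shows "(D1 ** membership_matrix c ** B ** transpose (membership_matrix c) ** D2) $ i $ j
    = D1 $ i $ i * (membership_matrix c ** B ** transpose (membership_matrix c)) $ i $ j * D2 $ j $ j"
proof -
  have "D1 ** membership_matrix c ** B ** transpose (membership_matrix c) ** D2
      = (D1 ** (membership_matrix c ** B ** transpose (membership_matrix c))) ** D2"
    by (simp add: matrix_mul_assoc)
  then show ?thesis
    by (simp add: is_diagonal_mult_left[OF assms(1)] is_diagonal_mult_right[OF assms(2)])
qed

lemma transpose_block_model:
  assumes "is_diagonal D1" and "is_diagonal D2"
  shows "transpose (D1 ** membership_matrix c ** B ** transpose (membership_matrix c) ** D2)
    = D2 ** membership_matrix c ** transpose B ** transpose (membership_matrix c) ** D1"
  by (simp add: matrix_transpose_mul transpose_is_diagonal assms matrix_mul_assoc)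

lemma block_model_no_zero_row:
  fixes c :: "'n::finite \<Rightarrow> 'r::finite"
  assumes "surj c" and "\<forall>k. \<exists>l. B $ k $ l \<noteq> 0"
    and "is_diagonal D1" and "\<forall>i. 0 < D1 $ i $ i"
    and "is_diagonal D2" and "\<forall>i. 0 < D2 $ i $ i"
  shows "\<exists>j. (D1 ** membership_matrix c ** B ** transpose (membership_matrix c) ** D2) $ i $ j \<noteq> 0"
proof -
  obtain l where "B $ c i $ l \<noteq> 0"
    using assms(2) by blast
  moreover obtain j where "c j = l"
    using assms(1) by (metis surjD)
  moreover have "D1 $ i $ i \<noteq> 0" and "D2 $ j $ j \<noteq> 0"
    using assms(4,6) by (metis less_irrefl)+
  ultimately have "(D1 ** membership_matrix c ** B ** transpose (membership_matrix c) ** D2) $ i $ j \<noteq> 0"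
    using card_block_pos[OF assms(1)]
    by (auto simp: block_model_entry[OF assms(3,5)] membership_congruence_entry)
  then show ?thesis ..
qed

lemma block_model_no_zero_column:
  fixes c :: "'n::finite \<Rightarrow> 'r::finite"
  assumes "surj c" and "\<forall>l. \<exists>k. B $ k $ l \<noteq> 0"
    and "is_diagonal D1" and "\<forall>i. 0 < D1 $ i $ i"
    and "is_diagonal D2" and "\<forall>i. 0 < D2 $ i $ i"
  shows "\<exists>i. (D1 ** membership_matrix c ** B ** transpose (membership_matrix c) ** D2) $ i $ j \<noteq> 0"
proof -
  have "\<forall>k. \<exists>l. transpose B $ k $ l \<noteq> 0"
    using assms(2) by (simp add: transpose_def)
  then have "\<exists>i. transpose (D1 ** membership_matrix c ** B ** transpose (membership_matrix c) ** D2) $ j $ i \<noteq> 0"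
    unfolding transpose_block_model[OF assms(3,5)]
    using block_model_no_zero_row[of c "transpose B" D2 D1] assms(1,3-6) by blast
  then show ?thesis
    by (simp add: transpose_def)
qed

lemma nonneg_mat_row_normalize: "nonneg_mat A \<Longrightarrow> nonneg_mat (row_normalize A)"
  by (simp add: nonneg_mat_def row_normalize_def sum_nonneg)

lemma row_sum_pos:
  assumes "nonneg_mat A" and "A $ i $ j \<noteq> 0"
  shows "0 < (\<Sum>l\<in>UNIV. A $ i $ l)"
  using assms by (intro sum_pos2[where i = j]) (auto simp: nonneg_mat_def order.not_eq_order_implies_strict)

lemma row_normalize_mult_1:
  assumes "nonneg_mat A" and "\<forall>i. \<exists>j. A $ i $ j \<noteq> 0"
  shows "row_normalize A *v 1 = 1"
proof -
  have "(\<Sum>l\<in>UNIV. A $ i $ l) \<noteq> 0" for i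
    using assms row_sum_pos by (metis less_irrefl)
  then show ?thesis
    by (simp add: row_normalize_def vec_eq_iff matrix_vector_mult_def sum_divide_distrib[symmetric])
qed

lemma row_normalize_eq_diag_mult:
  "row_normalize A = diag_matrix (\<chi> i. inverse (\<Sum>l\<in>UNIV. A $ i $ l)) ** A"
  by (simp add: vec_eq_iff row_normalize_def is_diagonal_mult_left[OF is_diagonal_diag_matrix]
      diag_matrix_diag divide_inverse mult.commute)

lemma membership_matrix_mult_eq_0:
  assumes "surj c" and "membership_matrix c *v v = 0"
  shows "v = 0"
  using assms transpose_membership_matrix_mult_self matrix_left_invertible_ker by blast

lemma invertible_transpose_mult_eq_0:
  fixes B :: "real^'n::finite^'n"
  assumes "invertible B" and "transpose B *v x = 0"
  shows "x = 0"
  using assms transpose_invertible invertible_left_inverse matrix_left_invertible_ker by metis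

lemma transpose_row_normalize_block_model_injective:
  fixes c :: "'n::finite \<Rightarrow> 'r::finite" and B :: "real^'r^'r" and D1 D2 :: "real^'n^'n"
  defines "\<Theta> \<equiv> membership_matrix c"
  defines "A \<equiv> D1 ** \<Theta> ** B ** transpose \<Theta> ** D2"
  assumes "surj c" and "invertible B"
    and "is_diagonal D1" and "\<forall>i. 0 < D1 $ i $ i"
    and "is_diagonal D2" and "\<forall>i. 0 < D2 $ i $ i"
    and "nonneg_mat A" and "\<forall>i. \<exists>j. A $ i $ j \<noteq> 0"
    and "transpose (row_normalize A) *v (\<Theta> *v v) = 0"
  shows "v = 0"
proof -
  define G where "G = D1 ** diag_matrix (\<chi> i. inverse (\<Sum>l\<in>UNIV. A $ i $ l))"
  have G_diag: "is_diagonal G"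
    by (simp add: G_def is_diagonal_mult assms(5) is_diagonal_diag_matrix)
  have "0 < (\<Sum>l\<in>UNIV. A $ i $ l)" for i
    using assms(9,10) row_sum_pos by blast
  then have G_pos: "\<forall>i. 0 < G $ i $ i"
    using assms(6) by (simp add: G_def is_diagonal_mult_left[OF assms(5)] diag_matrix_diag)
  have "transpose (row_normalize A) = D2 ** \<Theta> ** transpose B ** transpose \<Theta> ** G"
    by (simp add: A_def \<Theta>_def G_def row_normalize_eq_diag_mult matrix_transpose_mul
        transpose_block_model transpose_is_diagonal is_diagonal_diag_matrix matrix_mul_assoc assms(5,7))
  then have "D2 *v (\<Theta> *v (transpose B *v (transpose \<Theta> *v (G *v (\<Theta> *v v))))) = 0"
    using assms(11) by (simp add: matrix_vector_mul_assoc matrix_mul_assoc del: transpose_matrix_vector)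
  then have "\<Theta> *v (transpose B *v (transpose \<Theta> *v (G *v (\<Theta> *v v)))) = 0"
    by (rule pos_diagonal_mult_eq_0[OF assms(7,8)])
  then have "transpose B *v (transpose \<Theta> *v (G *v (\<Theta> *v v))) = 0"
    unfolding \<Theta>_def by (rule membership_matrix_mult_eq_0[OF assms(3)])
  then have "transpose \<Theta> *v (G *v (\<Theta> *v v)) = 0"
    by (rule invertible_transpose_mult_eq_0[OF assms(4)])
  then have "(\<Theta> *v v) \<bullet> (G *v (\<Theta> *v v)) = 0"
    by (metis inner_transpose_mult inner_zero_right)
  then have "\<Theta> *v v = 0"
    using quadratic_form_pos_diagonal[OF G_diag G_pos] by force
  then show "v = 0"
    unfolding \<Theta>_def by (rule membership_matrix_mult_eq_0[OF assms(3)])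
qed

theorem lemma4:
  fixes c :: "'n::finite \<Rightarrow> 'r::finite"
    and B :: "real^'r^'r"
    and D1 D2 :: "real^'n^'n"
    and \<beta> :: real
  assumes "CARD('r) \<le> CARD('n)"
    and "surj c"
    and "\<forall>i j. 0 \<le> B $ i $ j"
    and "\<forall>i. \<exists>j. B $ i $ j \<noteq> 0"
    and "\<forall>j. \<exists>i. B $ i $ j \<noteq> 0"
    and "is_diagonal D1" and "\<forall>i. 0 < D1 $ i $ i"
    and "is_diagonal D2" and "\<forall>i. 0 < D2 $ i $ i"
    and "\<forall>i j. 0 \<le> (D1 ** membership_matrix c ** B ** transpose (membership_matrix c) ** D2) $ i $ j
              \<and> (D1 ** membership_matrix c ** B ** transpose (membership_matrix c) ** D2) $ i $ j \<le> 1"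
    and "\<beta>\<^sup>2 < 1"
  shows "let \<Theta> = membership_matrix c;
             A = D1 ** \<Theta> ** B ** transpose \<Theta> ** D2;
             P = row_normalize A;
             Q = row_normalize (transpose A);
             M = transpose \<Theta> ** P ** \<Theta>;
             N = transpose \<Theta> ** Q ** \<Theta>;
             eqn = (\<lambda>X::real^'r^'r. X - (\<beta>\<^sup>2 / 2) *\<^sub>R (M ** X ** transpose M + N ** X ** transpose N)
                        = transpose \<Theta> ** (P ** transpose P + Q ** transpose Q) ** \<Theta>)
         in (\<exists>!X. eqn X) \<and>
            (\<forall>X. eqn X \<longrightarrow> psd X \<and> (invertible B \<longrightarrow> pos_def X))"
proof -
  let ?\<Theta> = "membership_matrix c"
  let ?A = "D1 ** ?\<Theta> ** B ** transpose ?\<Theta> ** D2"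
  let ?P = "row_normalize ?A"
  let ?Q = "row_normalize (transpose ?A)"
  let ?C = "transpose ?\<Theta> ** (?P ** transpose ?P + ?Q ** transpose ?Q) ** ?\<Theta>"
  have A_nonneg: "nonneg_mat ?A"
    using assms(10) by (simp add: nonneg_mat_def)
  have A_rows: "\<forall>i. \<exists>j. ?A $ i $ j \<noteq> 0"
    using block_model_no_zero_row assms(2,4,6-9) by blast
  have A_cols: "\<forall>i. \<exists>j. transpose ?A $ i $ j \<noteq> 0"
    using block_model_no_zero_column[OF assms(2,5-9)] by (simp add: transpose_def)
  interpret stein_contraction \<beta> "transpose ?\<Theta> ** ?P ** ?\<Theta>" "transpose ?\<Theta> ** ?Q ** ?\<Theta>"
    "sqrt_block_sizes c"
    using assms(2,11) A_nonneg A_rows A_cols sqrt_block_sizes_pos[OF assms(2)]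
    by unfold_locales
      (simp_all add: nonneg_mat_mult nonneg_mat_transpose nonneg_membership_matrix
        nonneg_mat_row_normalize row_normalize_mult_1 membership_compress_fixes_sqrt_block_sizes)
  have "psd ?C"
    by (intro psd_congruence psd_add psd_gram)
  moreover have "pos_def ?C" if "invertible B"
    using transpose_row_normalize_block_model_injective[OF assms(2) that assms(6-9) A_nonneg A_rows]
    by (intro pos_def_congruence_gram psd_gram) blast
  ultimately show ?thesis
    unfolding Let_def stein_op_def[symmetric]
    using stein_equation_unique_solution stein_solution_psd stein_solution_pos_def by blast
qed

end
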